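(* Let $\mathbb M=(V,d)$ be a binary structure and $A\subseteq V$. Then $A$ is a robust module of $\mathbb M$ with at least two elements if and only if $A$ is a non-limit module of $\mathbb M$.
   Context: A binary structure over a set $W$ is a pair $\mathbb M=(V,d)$ with $d:V\times V\to W$. A module of $\mathbb M$ is a set $A\subseteq V$ such that $d(x,y)=d(x,y')$ and $d(y,x)=d(y',x)$ for all $x\in V\setminus A$ and $y,y'\in A$. A module is strong if for every module $B$, either $A\subseteq B$, $B\subseteq A$, or $A\cap B=\emptyset$. For $X\subseteq V$, $S_{\mathbb M}(X)$ is the intersection of all strong modules containing $X$. A module is robust if it is a singleton or equals $S_{\mathbb M}(\{x,y\})$ for some distinct $x,y\in V$. A module $I$ is non-limit if it is strong and contains a non-empty strong module $J\neq I$ which is maximal among the strong modules contained in $I$ and distinct from $I$. *)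

theory Defs
  imports Main
begin

text \<open>A binary structure over W is a pair (V, d) with d : V x V -> W; we represent it
  by a carrier set V :: 'a set and a function d :: 'a => 'a => 'w (only its values on
  V x V matter).\<close>

definition is_module :: "'a set \<Rightarrow> ('a \<Rightarrow> 'a \<Rightarrow> 'w) \<Rightarrow> 'a set \<Rightarrow> bool" where
  "is_module V d A \<longleftrightarrow> A \<subseteq> V \<and>
     (\<forall>x \<in> V - A. \<forall>y \<in> A. \<forall>y' \<in> A. d x y = d x y' \<and> d y x = d y' x)"

definition strong_module :: "'a set \<Rightarrow> ('a \<Rightarrow> 'a \<Rightarrow> 'w) \<Rightarrow> 'a set \<Rightarrow> bool" where
  "strong_module V d A \<longleftrightarrow> is_module V d A \<and>
     (\<forall>B. is_module V d B \<longrightarrow> A \<subseteq> B \<or> B \<subseteq> A \<or> A \<inter> B = {})"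

definition S_hull :: "'a set \<Rightarrow> ('a \<Rightarrow> 'a \<Rightarrow> 'w) \<Rightarrow> 'a set \<Rightarrow> 'a set" where
  "S_hull V d X = \<Inter> {B. strong_module V d B \<and> X \<subseteq> B}"

definition robust_module :: "'a set \<Rightarrow> ('a \<Rightarrow> 'a \<Rightarrow> 'w) \<Rightarrow> 'a set \<Rightarrow> bool" where
  "robust_module V d A \<longleftrightarrow> is_module V d A \<and>
     ((\<exists>x. A = {x}) \<or> (\<exists>x \<in> V. \<exists>y \<in> V. x \<noteq> y \<and> A = S_hull V d {x, y}))"

definition non_limit_module :: "'a set \<Rightarrow> ('a \<Rightarrow> 'a \<Rightarrow> 'w) \<Rightarrow> 'a set \<Rightarrow> bool" where
  "non_limit_module V d I \<longleftrightarrow> strong_module V d I \<and>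
     (\<exists>J. J \<noteq> {} \<and> strong_module V d J \<and> J \<subseteq> I \<and> J \<noteq> I \<and>
        (\<forall>K. strong_module V d K \<and> K \<subseteq> I \<and> K \<noteq> I \<and> J \<subseteq> K \<longrightarrow> K = J))"

end

theory Submission
  imports Defs
begin

text \<open>If \<open>A = S_hull V d {x, y}\<close>, the strong modules strictly inside \<open>A\<close> that contain \<open>x\<close>
  miss \<open>y\<close> and form a chain; its union is again a strong module strictly inside \<open>A\<close>, and it is
  the required maximal one. Conversely, if \<open>J\<close> is maximal in a strong module \<open>A\<close>, pick
  \<open>x \<in> J\<close> and \<open>y \<in> A - J\<close>: the hull of \<open>{x, y}\<close> is a strong module inside \<open>A\<close> meeting
  \<open>J\<close> and not contained in it, so it contains \<open>J\<close> and maximality forces it to be \<open>A\<close>.\<close>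

lemma is_moduleI:
  assumes "A \<subseteq> V"
    and "\<And>x y y'. x \<in> V - A \<Longrightarrow> y \<in> A \<Longrightarrow> y' \<in> A \<Longrightarrow> d x y = d x y' \<and> d y x = d y' x"
  shows "is_module V d A"
  using assms unfolding is_module_def by blast

lemma strong_module_is_module: "strong_module V d A \<Longrightarrow> is_module V d A"
  unfolding strong_module_def by blast

lemma strong_module_subset: "strong_module V d A \<Longrightarrow> A \<subseteq> V"
  unfolding strong_module_def is_module_def by blast

lemma strong_modules_comparable:
  assumes "strong_module V d M" "strong_module V d N" "M \<inter> N \<noteq> {}"
  shows "M \<subseteq> N \<or> N \<subseteq> M"
  using assms unfolding strong_module_def by blast

lemma strong_module_carrier: "strong_module V d V"
  unfolding strong_module_def is_module_def by blast

lemma strong_module_singleton: "x \<in> V \<Longrightarrow> strong_module V d {x}"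
  unfolding strong_module_def is_module_def by blast

lemma is_module_Inter:
  assumes "F \<noteq> {}" "\<And>M. M \<in> F \<Longrightarrow> is_module V d M"
  shows "is_module V d (\<Inter>F)"
proof (rule is_moduleI)
  show "\<Inter>F \<subseteq> V" using assms unfolding is_module_def by blast
next
  fix x y y' assume "x \<in> V - \<Inter>F" "y \<in> \<Inter>F" "y' \<in> \<Inter>F"
  then obtain M where "M \<in> F" "x \<in> V - M" "y \<in> M" "y' \<in> M" by blast
  then show "d x y = d x y' \<and> d y x = d y' x"
    using assms(2) unfolding is_module_def by blast
qed

lemma strong_module_Inter:
  assumes "F \<noteq> {}" "\<And>M. M \<in> F \<Longrightarrow> strong_module V d M"
  shows "strong_module V d (\<Inter>F)"
proof -
  have "\<Inter>F \<subseteq> B \<or> B \<subseteq> \<Inter>F \<or> \<Inter>F \<inter> B = {}" if B: "is_module V d B" for B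
  proof (cases "\<Inter>F \<inter> B = {} \<or> B \<subseteq> \<Inter>F")
    case False
    then obtain M where M: "M \<in> F" "\<not> B \<subseteq> M" "M \<inter> B \<noteq> {}" by blast
    then have "M \<subseteq> B" using assms(2)[OF M(1)] B unfolding strong_module_def by blast
    then show ?thesis using M(1) by blast
  qed blast
  moreover have "is_module V d (\<Inter>F)"
    using assms strong_module_is_module by (intro is_module_Inter) auto
  ultimately show ?thesis unfolding strong_module_def by blast
qed

lemma strong_module_Union_chain:
  assumes strong: "\<And>M. M \<in> F \<Longrightarrow> strong_module V d M"
    and chain: "\<And>M N. M \<in> F \<Longrightarrow> N \<in> F \<Longrightarrow> M \<subseteq> N \<or> N \<subseteq> M"
  shows "strong_module V d (\<Union>F)"
proof -
  have "is_module V d (\<Union>F)"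
  proof (rule is_moduleI)
    show "\<Union>F \<subseteq> V" using strong strong_module_subset by blast
  next
    fix x y y' assume x: "x \<in> V - \<Union>F" and "y \<in> \<Union>F" "y' \<in> \<Union>F"
    then obtain L where L: "L \<in> F" "y \<in> L" "y' \<in> L" using chain by blast
    then have "x \<in> V - L" using x by blast
    then show "d x y = d x y' \<and> d y x = d y' x"
      using strong[OF L(1)] L unfolding strong_module_def is_module_def by blast
  qed
  moreover have "\<Union>F \<subseteq> B \<or> B \<subseteq> \<Union>F \<or> \<Union>F \<inter> B = {}" if B: "is_module V d B" for B
  proof (cases "\<Union>F \<inter> B = {} \<or> \<Union>F \<subseteq> B")
    case False
    then obtain M N where "M \<in> F" "N \<in> F" "\<not> M \<subseteq> B" "N \<inter> B \<noteq> {}" by blast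
    then obtain L where L: "L \<in> F" "\<not> L \<subseteq> B" "L \<inter> B \<noteq> {}" using chain by blast
    then have "B \<subseteq> L" using strong[OF L(1)] B unfolding strong_module_def by blast
    then show ?thesis using L(1) by blast
  qed blast
  ultimately show ?thesis unfolding strong_module_def by blast
qed

lemma strong_module_S_hull: "X \<subseteq> V \<Longrightarrow> strong_module V d (S_hull V d X)"
  unfolding S_hull_def using strong_module_carrier by (intro strong_module_Inter) blast+

lemma S_hull_superset: "X \<subseteq> S_hull V d X"
  unfolding S_hull_def by blast

lemma S_hull_least: "strong_module V d K \<Longrightarrow> X \<subseteq> K \<Longrightarrow> S_hull V d X \<subseteq> K"
  unfolding S_hull_def by blast

lemma non_limit_moduleI:
  assumes "strong_module V d A" "strong_module V d J" "J \<noteq> {}" "J \<subseteq> A" "J \<noteq> A"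
    and "\<And>K. strong_module V d K \<Longrightarrow> K \<subseteq> A \<Longrightarrow> K \<noteq> A \<Longrightarrow> J \<subseteq> K \<Longrightarrow> K = J"
  shows "non_limit_module V d A"
  unfolding non_limit_module_def using assms by (intro conjI exI[of _ J]) auto

lemma non_limit_moduleE:
  assumes "non_limit_module V d A"
  obtains J where "strong_module V d A" "strong_module V d J" "J \<noteq> {}" "J \<subseteq> A" "J \<noteq> A"
    "\<And>K. strong_module V d K \<Longrightarrow> K \<subseteq> A \<Longrightarrow> K \<noteq> A \<Longrightarrow> J \<subseteq> K \<Longrightarrow> K = J"
  using assms unfolding non_limit_module_def by (elim conjE exE, intro that) auto

lemma non_limit_module_S_hull_pair:
  assumes "x \<in> V" "y \<in> V" "x \<noteq> y"
  shows "non_limit_module V d (S_hull V d {x, y})"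
proof -
  define A where "A = S_hull V d {x, y}"
  have xyA: "x \<in> A" "y \<in> A" using S_hull_superset[of "{x, y}" V d] unfolding A_def by auto
  define F where "F = {K. strong_module V d K \<and> K \<subseteq> A \<and> K \<noteq> A \<and> x \<in> K}"
  define J where "J = \<Union>F"
  have y_notin_F: "y \<notin> K" if "K \<in> F" for K
    using that S_hull_least[of V d K "{x, y}"] unfolding F_def A_def by blast
  have "{x} \<noteq> A" using xyA(2) assms(3) by blast
  then have x_singleton_F: "{x} \<in> F"
    unfolding F_def using strong_module_singleton[OF assms(1)] xyA(1) by simp
  show ?thesis
    unfolding A_def[symmetric]
  proof (rule non_limit_moduleI)
    show "strong_module V d A"
      unfolding A_def using assms by (simp add: strong_module_S_hull)
    show "strong_module V d J"
      unfolding J_def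
    proof (rule strong_module_Union_chain)
      show "M \<subseteq> N \<or> N \<subseteq> M" if "M \<in> F" "N \<in> F" for M N
        using that by (intro strong_modules_comparable) (auto simp: F_def)
    qed (simp add: F_def)
    show "J \<noteq> {}" using x_singleton_F unfolding J_def by blast
    show "J \<subseteq> A" unfolding J_def F_def by blast
    show "J \<noteq> A" using y_notin_F xyA(2) unfolding J_def by blast
    show "K = J" if "strong_module V d K" "K \<subseteq> A" "K \<noteq> A" "J \<subseteq> K" for K
    proof -
      have "x \<in> K" using that(4) x_singleton_F unfolding J_def by blast
      then have "K \<in> F" using that(1-3) unfolding F_def by blast
      then show "K = J" using that(4) unfolding J_def by blast
    qed
  qed
qed

lemma non_limit_module_eq_S_hull_pair:
  assumes A: "strong_module V d A"
    and J: "strong_module V d J" "J \<subseteq> A" "J \<noteq> A"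
    and maximal: "\<And>K. strong_module V d K \<Longrightarrow> K \<subseteq> A \<Longrightarrow> K \<noteq> A \<Longrightarrow> J \<subseteq> K \<Longrightarrow> K = J"
    and xy: "x \<in> J" "y \<in> A" "y \<notin> J"
  shows "A = S_hull V d {x, y}"
proof -
  define S where "S = S_hull V d {x, y}"
  have xyS: "x \<in> S" "y \<in> S" using S_hull_superset[of "{x, y}" V d] unfolding S_def by auto
  have xyA: "{x, y} \<subseteq> A" using J(2) xy by auto
  then have "{x, y} \<subseteq> V" using strong_module_subset[OF A] by auto
  then have S_strong: "strong_module V d S"
    unfolding S_def by (rule strong_module_S_hull)
  have S_A: "S \<subseteq> A" unfolding S_def using xyA by (rule S_hull_least[OF A])
  have "J \<subseteq> S"
    using strong_modules_comparable[OF J(1) S_strong] xy xyS by blast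
  have "S \<noteq> J" using xy(3) xyS(2) by blast
  then have "A = S" using maximal[OF S_strong S_A _ \<open>J \<subseteq> S\<close>] by blast
  then show ?thesis unfolding S_def .
qed

lemma robust_module_S_hull_pair:
  assumes "x \<in> V" "y \<in> V" "x \<noteq> y"
  shows "robust_module V d (S_hull V d {x, y})"
proof -
  have "is_module V d (S_hull V d {x, y})"
    using assms by (simp add: strong_module_S_hull strong_module_is_module)
  then show ?thesis unfolding robust_module_def using assms by auto
qed

lemma robust_module_obtain_pair:
  assumes "robust_module V d A" "x \<in> A" "y \<in> A" "x \<noteq> y"
  obtains u v where "u \<in> V" "v \<in> V" "u \<noteq> v" "A = S_hull V d {u, v}"
proof -
  have "\<nexists>z. A = {z}" using assms(2-4) by auto
  then show ?thesis using assms(1) that unfolding robust_module_def by auto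
qed

theorem proposition6p5:
  fixes V :: "'a set" and d :: "'a \<Rightarrow> 'a \<Rightarrow> 'w" and A :: "'a set"
  assumes "A \<subseteq> V"
  shows "(robust_module V d A \<and> (\<exists>x \<in> A. \<exists>y \<in> A. x \<noteq> y)) \<longleftrightarrow> non_limit_module V d A"
proof
  assume "robust_module V d A \<and> (\<exists>x \<in> A. \<exists>y \<in> A. x \<noteq> y)"
  then obtain x y where "robust_module V d A" "x \<in> A" "y \<in> A" "x \<noteq> y" by blast
  then obtain u v where "u \<in> V" "v \<in> V" "u \<noteq> v" "A = S_hull V d {u, v}"
    by (rule robust_module_obtain_pair)
  then show "non_limit_module V d A" by (simp add: non_limit_module_S_hull_pair)
next
  assume "non_limit_module V d A"
  then obtain J where A: "strong_module V d A"
    and J: "strong_module V d J" "J \<noteq> {}" "J \<subseteq> A" "J \<noteq> A"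
    and maximal: "\<And>K. strong_module V d K \<Longrightarrow> K \<subseteq> A \<Longrightarrow> K \<noteq> A \<Longrightarrow> J \<subseteq> K \<Longrightarrow> K = J"
    by (elim non_limit_moduleE) (rule that)
  obtain x y where xy: "x \<in> J" "y \<in> A" "y \<notin> J" using J by blast
  have "A = S_hull V d {x, y}"
    using A J(1,3,4) maximal xy by (rule non_limit_module_eq_S_hull_pair)
  moreover have "x \<in> A" "x \<noteq> y" using xy J(3) by auto
  moreover have "x \<in> V" "y \<in> V" using \<open>x \<in> A\<close> xy(2) assms by auto
  ultimately show "robust_module V d A \<and> (\<exists>x \<in> A. \<exists>y \<in> A. x \<noteq> y)"
    using robust_module_S_hull_pair xy(2) by metis
qed

end
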